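(* Let $W(D_4)\subset\mathrm{O}_4(\mathbb R)$ be the group of matrices $D\cdot P(\pi)$ with $D=\mathrm{diag}(\varepsilon_1,\dots,\varepsilon_4)$, $\varepsilon_i=\pm1$, $\prod\varepsilon_i=1$, $P(\pi)$ the permutation matrix of $\pi\in\mathfrak S_4$, let $$\rho=\tfrac12\begin{pmatrix}-1&1&1&1\\-1&-1&1&-1\\-1&-1&-1&1\\-1&1&-1&-1\end{pmatrix},$$ and let $\tilde\rho$ be the automorphism $x\mapsto\rho x\rho^{-1}$ of $W(D_4)$. Then $\mathrm{Fix}(\tilde\rho)=\{x\in W(D_4)\mid\rho x\rho^{-1}=x\}$ is isomorphic to the group $\mathbb H^1$ of Hurwitz integral quaternions of norm $1$, a group of order $24$ isomorphic to $\mathfrak Q_8\rtimes\mathfrak C_3$, and this group is isomorphic to the double covering $\tilde{\mathfrak A}_4$ of $\mathfrak A_4$.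
   Context: $\mathbb H^1=\{\pm1,\pm i,\pm j,\pm k\}\cup\{\tfrac12(\pm1\pm i\pm j\pm k)\}$ inside the real quaternions; $\mathfrak Q_8$ is the quaternion group of order $8$, $\mathfrak C_3$ the cyclic group of order $3$ acting by conjugation with $-\tfrac12(1+i+j+k)$, and $\tilde{\mathfrak A}_4$ is the binary tetrahedral group (the nonsplit central extension of $\mathfrak A_4$ by a group of order $2$). *)

theory Defs
  imports "HOL-Analysis.Analysis" "HOL-Algebra.Sym_Groups" "HOL-Algebra.Coset"
begin

text \<open>Indices of the type 4 are 0,1,2,3 (standing for rows/columns 1..4).\<close>

definition ix4 :: "4 \<Rightarrow> nat" where
  "ix4 i = (if i = 0 then 0 else if i = 1 then 1 else if i = 2 then 2 else 3)"

definition diag_mat :: "real^4 \<Rightarrow> real^4^4" where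
  "diag_mat e = (\<chi> i j. if i = j then e $ i else 0)"

definition perm_mat :: "(4 \<Rightarrow> 4) \<Rightarrow> real^4^4" where
  "perm_mat p = (\<chi> i j. if i = p j then 1 else 0)"

definition WD4 :: "(real^4^4) set" where
  "WD4 = {diag_mat e ** perm_mat p | e p.
            (\<forall>i. e $ i = 1 \<or> e $ i = -1) \<and> (\<Prod>i\<in>UNIV. e $ i) = 1 \<and> p permutes UNIV}"

definition rho :: "real^4^4" where
  "rho = (\<chi> i j. (1/2) * real_of_int
     ([[-1, 1, 1, 1], [-1, -1, 1, -1], [-1, -1, -1, 1], [-1, 1, -1, -1]] ! ix4 i ! ix4 j))"

definition Fix_rho :: "(real^4^4) monoid" where
  "Fix_rho = \<lparr> carrier = {x \<in> WD4. rho ** x ** matrix_inv rho = x},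
               mult = (\<lambda>x y. x ** y), one = mat 1 \<rparr>"

datatype quat = Quat (Re: real) (Im1: real) (Im2: real) (Im3: real)

definition qmult :: "quat \<Rightarrow> quat \<Rightarrow> quat" where
  "qmult p q = Quat
     (Re p * Re q - Im1 p * Im1 q - Im2 p * Im2 q - Im3 p * Im3 q)
     (Re p * Im1 q + Im1 p * Re q + Im2 p * Im3 q - Im3 p * Im2 q)
     (Re p * Im2 q - Im1 p * Im3 q + Im2 p * Re q + Im3 p * Im1 q)
     (Re p * Im3 q + Im1 p * Im2 q - Im2 p * Im1 q + Im3 p * Re q)"

definition qconj :: "quat \<Rightarrow> quat" where
  "qconj q = Quat (Re q) (- Im1 q) (- Im2 q) (- Im3 q)"

definition Q8_set :: "quat set" where
  "Q8_set = {Quat s 0 0 0 | s. s \<in> {1,-1}} \<union> {Quat 0 s 0 0 | s. s \<in> {1,-1}}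
          \<union> {Quat 0 0 s 0 | s. s \<in> {1,-1}} \<union> {Quat 0 0 0 s | s. s \<in> {1,-1}}"

definition H1_set :: "quat set" where
  "H1_set = Q8_set \<union>
     {Quat (a/2) (b/2) (c/2) (d/2) | a b c d. a \<in> {1,-1} \<and> b \<in> {1,-1} \<and> c \<in> {1,-1} \<and> d \<in> {1,-1}}"

definition H1 :: "quat monoid" where
  "H1 = \<lparr> carrier = H1_set, mult = qmult, one = Quat 1 0 0 0 \<rparr>"

text \<open>The generator of C3 acts by conjugation with omega = -(1+i+j+k)/2.\<close>
definition omega :: quat where
  "omega = Quat (-1/2) (-1/2) (-1/2) (-1/2)"

definition conj_omega :: "quat \<Rightarrow> quat" where
  "conj_omega x = qmult (qmult omega x) (qconj omega)"

definition Q8_rtimes_C3 :: "(quat \<times> nat) monoid" where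
  "Q8_rtimes_C3 = \<lparr> carrier = Q8_set \<times> {0..<3},
     mult = (\<lambda>(a, m) (b, n). (qmult a ((conj_omega ^^ m) b), (m + n) mod 3)),
     one = (Quat 1 0 0 0, 0) \<rparr>"

text \<open>G is (isomorphic to) the binary tetrahedral group: a nonsplit central extension of
  A4 by a group of order 2.  Such an extension is unique up to isomorphism.\<close>
definition binary_tetrahedral :: "('a, 'b) monoid_scheme \<Rightarrow> bool" where
  "binary_tetrahedral G \<longleftrightarrow> group G \<and>
     (\<exists>Z. subgroup Z G \<and> card Z = 2 \<and>
          (\<forall>z\<in>Z. \<forall>g\<in>carrier G. z \<otimes>\<^bsub>G\<^esub> g = g \<otimes>\<^bsub>G\<^esub> z) \<and>
          (G Mod Z) \<cong> alt_group 4 \<and>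
          \<not> (\<exists>K. subgroup K G \<and> K \<inter> Z = {\<one>\<^bsub>G\<^esub>} \<and> K <#>\<^bsub>G\<^esub> Z = carrier G))"

end

theory Submission
  imports Defs
begin

text \<open>
  The 24 Hurwitz units are encoded by their doubled coordinates, which are integer lists; closure,
  inverses and the multiplication tables used below are then checked by evaluation.

  With \<open>\<omega> = -(1+i+j+k)/2\<close> we have \<open>\<omega>\<^sup>3 = 1\<close> and \<open>\<omega>, \<omega>\<^sup>2 \<notin> Q\<^sub>8\<close>, while conjugation by
  \<open>\<omega>\<close> preserves \<open>Q\<^sub>8\<close>.  Hence \<open>(a, m) \<mapsto> a \<omega>\<^sup>m\<close> is an injective homomorphism from
  \<open>Q\<^sub>8 \<rtimes> C\<^sub>3\<close> into \<open>H\<^sup>1\<close>, and bijective by counting.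

  Conjugation permutes the four cyclic subgroups of order 6 of \<open>H\<^sup>1\<close> by even permutations; this
  is a homomorphism onto \<open>A\<^sub>4\<close> with kernel \<open>{\<plusminus>1}\<close>.

  The matrix \<open>rho\<close> is left multiplication by \<open>\<omega>\<close>.  Exactly 24 elements of \<open>W(D\<^sub>4)\<close> commute
  with it, namely the maps \<open>x \<mapsto> \<omega>\<^sup>2\<^sup>m x q'\<close> for \<open>q = a \<omega>\<^sup>m\<close>, where \<open>q'\<close> is \<open>q\<close> with
  \<open>i\<close> and \<open>j\<close> interchanged, and \<open>q\<close> is sent to this map by an isomorphism \<open>H\<^sup>1 \<cong> Fix(rho)\<close>.
\<close>

lemma iso_set_sym_mult_closed:
  assumes h: "h \<in> iso G H"
    and closed: "\<And>x y. x \<in> carrier G \<Longrightarrow> y \<in> carrier G \<Longrightarrow> x \<otimes>\<^bsub>G\<^esub> y \<in> carrier G"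
  shows "inv_into (carrier G) h \<in> iso H G"
proof -
  let ?g = "inv_into (carrier G) h"
  have bij: "bij_betw h (carrier G) (carrier H)" and hom: "h \<in> hom G H"
    using h by (auto simp: iso_def)
  then have bij_g: "bij_betw ?g (carrier H) (carrier G)"
    by (simp add: bij_betw_inv_into)
  have "?g \<in> hom H G"
  proof (rule homI)
    fix x assume "x \<in> carrier H"
    then show "?g x \<in> carrier G"
      using bij_g bij_betwE by blast
  next
    fix x y assume xy: "x \<in> carrier H" "y \<in> carrier H"
    then have g_in: "?g x \<in> carrier G" "?g y \<in> carrier G"
      using bij_g bij_betwE by blast+
    show "?g (x \<otimes>\<^bsub>H\<^esub> y) = ?g x \<otimes>\<^bsub>G\<^esub> ?g y"
    proof (rule inv_into_f_eq)
      show "inj_on h (carrier G)"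
        using bij bij_betw_def by blast
      show "?g x \<otimes>\<^bsub>G\<^esub> ?g y \<in> carrier G"
        using closed g_in by blast
      show "h (?g x \<otimes>\<^bsub>G\<^esub> ?g y) = x \<otimes>\<^bsub>H\<^esub> y"
        using hom g_in xy bij bij_betw_inv_into_right[of h] by (simp add: hom_def)
    qed
  qed
  then show ?thesis
    using bij_g by (simp add: iso_def)
qed

lemma permutes_eqI:
  assumes "f permutes S" "g permutes S" "\<And>x. x \<in> S \<Longrightarrow> f x = g x"
  shows "f = g"
proof
  fix x show "f x = g x"
    using assms by (cases "x \<in> S") (simp_all add: permutes_not_in)
qed

lemma transpose_comp_transpose_in_alt_group:
  assumes "a \<in> {1..n}" "b \<in> {1..n}" "c \<in> {1..n}" "d \<in> {1..n}" "(a = b) = (c = d)"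
  shows "Transposition.transpose a b \<circ> Transposition.transpose c d \<in> carrier (alt_group n)"
proof -
  have "Transposition.transpose a b \<circ> Transposition.transpose c d permutes {1..n}"
    using assms by (intro permutes_compose permutes_swap_id) auto
  moreover have "evenperm (Transposition.transpose a b \<circ> Transposition.transpose c d)"
    using assms(5) by (simp add: evenperm_comp permutation_swap_id evenperm_swap)
  ultimately show ?thesis
    by (simp add: alt_group_carrier)
qed

lemma matrix_inv_eqI:
  fixes A B :: "'a::semiring_1^'n^'n"
  assumes "A ** B = mat 1" "B ** A = mat 1"
  shows "matrix_inv A = B"
proof -
  have "A ** matrix_inv A = mat 1 \<and> matrix_inv A ** A = mat 1"
    unfolding matrix_inv_def using assms by (rule someI[where x = B, OF conjI])
  then have "matrix_inv A = matrix_inv A ** (A ** B)"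
    by (simp add: assms matrix_mul_rid)
  also have "\<dots> = B"
    by (simp add: \<open>A ** matrix_inv A = mat 1 \<and> matrix_inv A ** A = mat 1\<close> matrix_mul_assoc matrix_mul_lid)
  finally show ?thesis .
qed

lemma conj_fixed_iff_commute:
  fixes A B X :: "'a::semiring_1^'n^'n"
  assumes "A ** B = mat 1" "B ** A = mat 1"
  shows "A ** X ** B = X \<longleftrightarrow> A ** X = X ** A"
proof
  assume "A ** X ** B = X"
  then have "A ** X ** B ** A = X ** A"
    by simp
  then show "A ** X = X ** A"
    by (metis assms(2) matrix_mul_assoc matrix_mul_rid)
next
  assume "A ** X = X ** A"
  then show "A ** X ** B = X"
    by (metis assms(1) matrix_mul_assoc matrix_mul_rid)
qed

section \<open>The Hurwitz units\<close>

lemma qmult_assoc: "qmult (qmult a b) c = qmult a (qmult b c)"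
  by (simp add: qmult_def algebra_simps)

lemma qmult_one_left [simp]: "qmult (Quat 1 0 0 0) x = x"
  and qmult_one_right [simp]: "qmult x (Quat 1 0 0 0) = x"
  by (cases x; simp add: qmult_def)+

definition quat_half :: "int list \<Rightarrow> quat" where
  "quat_half l = Quat (of_int (l ! 0) / 2) (of_int (l ! 1) / 2) (of_int (l ! 2) / 2) (of_int (l ! 3) / 2)"

definition twice_coords :: "quat \<Rightarrow> int list" where
  "twice_coords q = [\<lfloor>2 * Re q\<rfloor>, \<lfloor>2 * Im1 q\<rfloor>, \<lfloor>2 * Im2 q\<rfloor>, \<lfloor>2 * Im3 q\<rfloor>]"

lemma twice_coords_quat_half: "length l = 4 \<Longrightarrow> twice_coords (quat_half l) = l"
  by (auto simp: twice_coords_def quat_half_def intro!: nth_equalityI simp: less_Suc_eq numeral_eq_Suc)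

definition mult_coords :: "int list \<Rightarrow> int list \<Rightarrow> int list" where
  "mult_coords p q =
    [p!0 * q!0 - p!1 * q!1 - p!2 * q!2 - p!3 * q!3,
     p!0 * q!1 + p!1 * q!0 + p!2 * q!3 - p!3 * q!2,
     p!0 * q!2 - p!1 * q!3 + p!2 * q!0 + p!3 * q!1,
     p!0 * q!3 + p!1 * q!2 - p!2 * q!1 + p!3 * q!0]"

definition half_mult_coords :: "int list \<Rightarrow> int list \<Rightarrow> int list" where
  "half_mult_coords p q = map (\<lambda>s. s div 2) (mult_coords p q)"

definition conj_coords :: "int list \<Rightarrow> int list" where
  "conj_coords p = [p ! 0, - p ! 1, - p ! 2, - p ! 3]"

lemma qmult_quat_half:
  assumes "mult_coords p q = map ((*) 2) r"
  shows "qmult (quat_half p) (quat_half q) = quat_half r"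
proof -
  have "qmult (quat_half p) (quat_half q) = Quat (mult_coords p q ! 0 / 4) (mult_coords p q ! 1 / 4)
      (mult_coords p q ! 2 / 4) (mult_coords p q ! 3 / 4)"
    by (simp add: qmult_def quat_half_def mult_coords_def field_simps)
  moreover have "length r = 4"
    using arg_cong[OF assms, of length] by (simp add: mult_coords_def)
  ultimately show ?thesis
    by (simp add: assms quat_half_def)
qed

lemma qconj_quat_half: "qconj (quat_half p) = quat_half (conj_coords p)"
  by (simp add: qconj_def quat_half_def conj_coords_def)

lemma one_quat_half: "Quat 1 0 0 0 = quat_half [2, 0, 0, 0]"
  by (simp add: quat_half_def)

definition hurwitz_units :: "int list list" where
  "hurwitz_units =
    [[2,0,0,0], [0,2,0,0], [0,0,2,0], [0,0,0,2], [-2,0,0,0], [0,-2,0,0], [0,0,-2,0], [0,0,0,-2],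
     [1,1,1,1], [1,1,1,-1], [1,1,-1,1], [1,1,-1,-1], [1,-1,1,1], [1,-1,1,-1], [1,-1,-1,1], [1,-1,-1,-1],
     [-1,1,1,1], [-1,1,1,-1], [-1,1,-1,1], [-1,1,-1,-1], [-1,-1,1,1], [-1,-1,1,-1], [-1,-1,-1,1], [-1,-1,-1,-1]]"

lemma length_hurwitz_units: "p \<in> set hurwitz_units \<Longrightarrow> length p = 4"
  by (auto simp: hurwitz_units_def)

lemma distinct_hurwitz_units: "distinct hurwitz_units"
  by code_simp

lemma hurwitz_units_mult_closed:
  "\<forall>p\<in>set hurwitz_units. \<forall>q\<in>set hurwitz_units.
     mult_coords p q = map ((*) 2) (half_mult_coords p q) \<and> half_mult_coords p q \<in> set hurwitz_units"
  by code_simp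

lemma hurwitz_units_conj:
  "\<forall>p\<in>set hurwitz_units. conj_coords p \<in> set hurwitz_units \<and> mult_coords (conj_coords p) p = [4, 0, 0, 0]"
  by code_simp

lemma qmult_hurwitz_units:
  assumes "p \<in> set hurwitz_units" "q \<in> set hurwitz_units"
  shows "qmult (quat_half p) (quat_half q) = quat_half (half_mult_coords p q)"
  using hurwitz_units_mult_closed assms qmult_quat_half by blast

lemma inj_on_quat_half: "inj_on quat_half (set hurwitz_units)"
  by (metis inj_on_inverseI length_hurwitz_units twice_coords_quat_half)

lemma quat_half_image_lists:
  "{Quat (a/2) (b/2) (c/2) (d/2) | a b c d.
      a \<in> of_int ` S \<and> b \<in> of_int ` S \<and> c \<in> of_int ` S \<and> d \<in> of_int ` S}
   = quat_half ` {[a, b, c, d] | a b c d. a \<in> S \<and> b \<in> S \<and> c \<in> S \<and> d \<in> S}"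
proof (intro equalityI subsetI)
  fix x assume "x \<in> {Quat (a/2) (b/2) (c/2) (d/2) | a b c d.
      a \<in> of_int ` S \<and> b \<in> of_int ` S \<and> c \<in> of_int ` S \<and> d \<in> of_int ` S}"
  then obtain a b c d where "a \<in> S" "b \<in> S" "c \<in> S" "d \<in> S"
    and "x = Quat (of_int a / 2) (of_int b / 2) (of_int c / 2) (of_int d / 2)"
    by blast
  then show "x \<in> quat_half ` {[a, b, c, d] | a b c d. a \<in> S \<and> b \<in> S \<and> c \<in> S \<and> d \<in> S}"
    by (auto intro!: image_eqI[where x = "[a, b, c, d]"] simp: quat_half_def)
next
  fix x assume "x \<in> quat_half ` {[a, b, c, d] | a b c d. a \<in> S \<and> b \<in> S \<and> c \<in> S \<and> d \<in> S}"
  then obtain a b c d where "a \<in> S" "b \<in> S" "c \<in> S" "d \<in> S" and "x = quat_half [a, b, c, d]"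
    by blast
  then show "x \<in> {Quat (a/2) (b/2) (c/2) (d/2) | a b c d.
      a \<in> of_int ` S \<and> b \<in> of_int ` S \<and> c \<in> of_int ` S \<and> d \<in> of_int ` S}"
    by (auto simp: quat_half_def)
qed

lemma Q8_set_quat_half: "Q8_set = quat_half ` set (take 8 hurwitz_units)"
  unfolding Q8_set_def hurwitz_units_def by (auto simp: quat_half_def)

lemma carrier_H1: "carrier H1 = quat_half ` set hurwitz_units"
proof -
  have pm_one: "{1, -1 :: real} = of_int ` {1, -1}"
    by simp
  have "{[a, b, c, d] | a b c d. a \<in> {1, -1} \<and> b \<in> {1, -1} \<and> c \<in> {1, -1} \<and> d \<in> {1, -1::int}}
      = set (drop 8 hurwitz_units)"
    unfolding hurwitz_units_def by auto
  then have "H1_set = quat_half ` set (take 8 hurwitz_units) \<union> quat_half ` set (drop 8 hurwitz_units)"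
    unfolding H1_set_def Q8_set_quat_half pm_one quat_half_image_lists by simp
  also have "\<dots> = quat_half ` set hurwitz_units"
    by (metis append_take_drop_id image_Un set_append)
  finally show ?thesis
    by (simp add: H1_def)
qed

lemma mult_H1 [simp]: "x \<otimes>\<^bsub>H1\<^esub> y = qmult x y"
  and one_H1 [simp]: "\<one>\<^bsub>H1\<^esub> = Quat 1 0 0 0"
  by (simp_all add: H1_def)

lemma group_H1: "group H1"
proof (rule groupI)
  fix x y assume "x \<in> carrier H1" "y \<in> carrier H1"
  then show "x \<otimes>\<^bsub>H1\<^esub> y \<in> carrier H1"
    using hurwitz_units_mult_closed by (auto simp: carrier_H1 qmult_hurwitz_units)
next
  show "\<one>\<^bsub>H1\<^esub> \<in> carrier H1"
    by (simp add: carrier_H1 one_quat_half hurwitz_units_def)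
next
  fix x y z show "x \<otimes>\<^bsub>H1\<^esub> y \<otimes>\<^bsub>H1\<^esub> z = x \<otimes>\<^bsub>H1\<^esub> (y \<otimes>\<^bsub>H1\<^esub> z)"
    by (simp add: qmult_assoc)
next
  fix x show "\<one>\<^bsub>H1\<^esub> \<otimes>\<^bsub>H1\<^esub> x = x"
    by simp
next
  fix x assume "x \<in> carrier H1"
  then obtain p where p: "p \<in> set hurwitz_units" "x = quat_half p"
    by (auto simp: carrier_H1)
  then have "qconj x \<in> carrier H1" "qmult (qconj x) x = Quat 1 0 0 0"
    using hurwitz_units_conj qmult_quat_half[of "conj_coords p" p "[2, 0, 0, 0]"]
    by (auto simp: carrier_H1 qconj_quat_half one_quat_half)
  then show "\<exists>y\<in>carrier H1. y \<otimes>\<^bsub>H1\<^esub> x = \<one>\<^bsub>H1\<^esub>"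
    by auto
qed

interpretation H1: group H1
  by (rule group_H1)

lemma order_H1: "order H1 = 24"
proof -
  have "length hurwitz_units = 24"
    by (simp add: hurwitz_units_def)
  then show ?thesis
    by (simp add: order_def carrier_H1 card_image inj_on_quat_half distinct_card distinct_hurwitz_units)
qed

section \<open>\<open>H1\<close> as a semidirect product\<close>

definition omega_pow :: "nat \<Rightarrow> quat" where
  "omega_pow k = (qmult omega ^^ k) (Quat 1 0 0 0)"

lemma omega_pow_0 [simp]: "omega_pow 0 = Quat 1 0 0 0"
  and omega_pow_Suc: "omega_pow (Suc k) = qmult omega (omega_pow k)"
  by (simp_all add: omega_pow_def)

lemma omega_pow_add: "omega_pow (m + n) = qmult (omega_pow m) (omega_pow n)"
  by (induction m) (simp_all add: omega_pow_Suc qmult_assoc)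

lemma omega_pow_3: "omega_pow 3 = Quat 1 0 0 0"
  by (simp add: omega_pow_def numeral_3_eq_3 omega_def qmult_def)

lemma omega_pow_mult_3: "omega_pow (3 * k) = Quat 1 0 0 0"
proof (induction k)
  case (Suc k)
  then show ?case
    by (metis mult_Suc_right omega_pow_3 omega_pow_add qmult_one_left)
qed simp

lemma omega_pow_mod_3: "omega_pow (n mod 3) = omega_pow n"
proof -
  have "omega_pow (3 * (n div 3) + n mod 3) = omega_pow (n mod 3)"
    by (simp only: omega_pow_add omega_pow_mult_3 qmult_one_left)
  then show ?thesis
    by simp
qed

lemma omega_pow_inverse:
  "qmult (omega_pow m) (omega_pow (2 * m)) = Quat 1 0 0 0"
  "qmult (omega_pow (2 * m)) (omega_pow m) = Quat 1 0 0 0"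
proof -
  have "m + 2 * m = 3 * m" "2 * m + m = 3 * m"
    by simp_all
  then show "qmult (omega_pow m) (omega_pow (2 * m)) = Quat 1 0 0 0"
    "qmult (omega_pow (2 * m)) (omega_pow m) = Quat 1 0 0 0"
    by (metis omega_pow_add omega_pow_mult_3)+
qed

lemma omega_pow_2: "omega_pow 2 = Quat (-1/2) (1/2) (1/2) (1/2)"
  by (simp add: omega_pow_def numeral_2_eq_2 omega_def qmult_def)

lemma qconj_omega: "qconj omega = omega_pow 2"
  by (simp add: omega_pow_def numeral_2_eq_2 omega_def qconj_def qmult_def)

lemma funpow_conj_omega: "(conj_omega ^^ m) b = qmult (qmult (omega_pow m) b) (omega_pow (2 * m))"
proof (induction m)
  case (Suc m)
  have "(conj_omega ^^ Suc m) b = qmult (qmult omega ((conj_omega ^^ m) b)) (omega_pow 2)"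
    by (simp add: conj_omega_def qconj_omega)
  also have "\<dots> = qmult (qmult (omega_pow (Suc m)) b) (qmult (omega_pow (2 * m)) (omega_pow 2))"
    by (simp add: Suc omega_pow_Suc qmult_assoc)
  also have "qmult (omega_pow (2 * m)) (omega_pow 2) = omega_pow (2 * Suc m)"
    by (simp flip: omega_pow_add)
  finally show ?case .
qed simp

lemma Q8_set_explicit: "Q8_set = {Quat 1 0 0 0, Quat (-1) 0 0 0, Quat 0 1 0 0, Quat 0 (-1) 0 0,
    Quat 0 0 1 0, Quat 0 0 (-1) 0, Quat 0 0 0 1, Quat 0 0 0 (-1)}"
  by (auto simp: Q8_set_def)

lemma card_Q8_set: "card Q8_set = 8"
  by (simp add: Q8_set_explicit)

lemma omega_pow_in_Q8_iff: "k < 3 \<Longrightarrow> omega_pow k \<in> Q8_set \<longleftrightarrow> k = 0"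
proof -
  assume "k < 3"
  then consider "k = 0" | "k = Suc 0" | "k = 2"
    by linarith
  then show ?thesis
    by cases (simp_all add: Q8_set_explicit omega_pow_Suc omega_pow_2 omega_def)
qed

lemma qconj_Q8: "\<forall>a\<in>Q8_set. qconj a \<in> Q8_set \<and> qmult (qconj a) a = Quat 1 0 0 0"
  by (simp add: Q8_set_explicit qconj_def qmult_def)

lemma qmult_Q8_closed: "\<forall>a\<in>Q8_set. \<forall>b\<in>Q8_set. qmult a b \<in> Q8_set"
  by (simp add: Q8_set_explicit qmult_def)

lemma conj_omega_Q8: "\<forall>b\<in>Q8_set. conj_omega b \<in> Q8_set"
  by (simp add: Q8_set_explicit conj_omega_def omega_def qconj_def qmult_def)

lemma funpow_conj_omega_Q8: "b \<in> Q8_set \<Longrightarrow> (conj_omega ^^ m) b \<in> Q8_set"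
  by (induction m) (simp_all add: conj_omega_Q8)

lemma Q8_subset_H1: "Q8_set \<subseteq> carrier H1"
  by (simp add: H1_def H1_set_def)

lemma omega_pow_in_H1: "omega_pow m \<in> carrier H1"
proof (induction m)
  case 0
  then show ?case
    using H1.one_closed by simp
next
  case (Suc m)
  have "omega \<in> carrier H1"
    by (simp add: carrier_H1 hurwitz_units_def omega_def quat_half_def image_iff)
  then show ?case
    using H1.m_closed Suc by (simp add: omega_pow_Suc)
qed

lemma carrier_Q8_rtimes_C3: "carrier Q8_rtimes_C3 = Q8_set \<times> {0..<3}"
  by (simp add: Q8_rtimes_C3_def)

lemma mult_Q8_rtimes_C3:
  "(a, m) \<otimes>\<^bsub>Q8_rtimes_C3\<^esub> (b, n) = (qmult a ((conj_omega ^^ m) b), (m + n) mod 3)"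
  by (simp add: Q8_rtimes_C3_def)

lemma Q8_rtimes_C3_mult_closed:
  "x \<in> carrier Q8_rtimes_C3 \<Longrightarrow> y \<in> carrier Q8_rtimes_C3 \<Longrightarrow> x \<otimes>\<^bsub>Q8_rtimes_C3\<^esub> y \<in> carrier Q8_rtimes_C3"
  by (auto simp: carrier_Q8_rtimes_C3 mult_Q8_rtimes_C3 qmult_Q8_closed funpow_conj_omega_Q8)

definition q8_omega_prod :: "quat \<times> nat \<Rightarrow> quat" where
  "q8_omega_prod = (\<lambda>(a, m). qmult a (omega_pow m))"

lemma q8_omega_prod_hom: "q8_omega_prod \<in> hom Q8_rtimes_C3 H1"
proof (rule homI)
  fix x assume "x \<in> carrier Q8_rtimes_C3"
  then show "q8_omega_prod x \<in> carrier H1"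
    using H1.m_closed Q8_subset_H1 omega_pow_in_H1
    by (auto simp: carrier_Q8_rtimes_C3 q8_omega_prod_def)
next
  fix x y assume "x \<in> carrier Q8_rtimes_C3" "y \<in> carrier Q8_rtimes_C3"
  then obtain a m b n where x: "x = (a, m)" and y: "y = (b, n)" "n < 3"
    by (auto simp: carrier_Q8_rtimes_C3)
  have "q8_omega_prod (x \<otimes>\<^bsub>Q8_rtimes_C3\<^esub> y)
      = qmult a (qmult (omega_pow m) (qmult b (qmult (qmult (omega_pow (2 * m)) (omega_pow m)) (omega_pow n))))"
    by (simp add: x y mult_Q8_rtimes_C3 q8_omega_prod_def funpow_conj_omega omega_pow_mod_3 omega_pow_add qmult_assoc)
  also have "\<dots> = q8_omega_prod x \<otimes>\<^bsub>H1\<^esub> q8_omega_prod y"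
    by (simp add: x y omega_pow_inverse q8_omega_prod_def qmult_assoc)
  finally show "q8_omega_prod (x \<otimes>\<^bsub>Q8_rtimes_C3\<^esub> y) = q8_omega_prod x \<otimes>\<^bsub>H1\<^esub> q8_omega_prod y" .
qed

lemma inj_on_q8_omega_prod: "inj_on q8_omega_prod (carrier Q8_rtimes_C3)"
proof (rule inj_onI)
  fix x y assume "x \<in> carrier Q8_rtimes_C3" "y \<in> carrier Q8_rtimes_C3"
    and eq: "q8_omega_prod x = q8_omega_prod y"
  then obtain a m b n where x: "x = (a, m)" "a \<in> Q8_set" "m < 3" and y: "y = (b, n)" "b \<in> Q8_set" "n < 3"
    by (auto simp: carrier_Q8_rtimes_C3)
  define k where "k = (m + 2 * n) mod 3"
  have "qmult a (omega_pow k) = qmult (qmult a (omega_pow m)) (omega_pow (2 * n))"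
    by (simp add: k_def omega_pow_mod_3 omega_pow_add qmult_assoc)
  also have "\<dots> = b"
    using eq by (simp add: x y q8_omega_prod_def qmult_assoc omega_pow_inverse)
  finally have ak: "qmult a (omega_pow k) = b" .
  then have "omega_pow k = qmult (qconj a) b"
    using qconj_Q8 \<open>a \<in> Q8_set\<close> by (metis qmult_assoc qmult_one_left)
  then have "omega_pow k \<in> Q8_set"
    using qconj_Q8 qmult_Q8_closed x y by simp
  then have "k = 0"
    using omega_pow_in_Q8_iff k_def by simp
  then show "x = y"
    using ak x y k_def by simp presburger
qed

lemma q8_omega_prod_image: "q8_omega_prod ` carrier Q8_rtimes_C3 = carrier H1"
proof (rule card_subset_eq)
  show "finite (carrier H1)"
    by (simp add: carrier_H1)
  show "q8_omega_prod ` carrier Q8_rtimes_C3 \<subseteq> carrier H1"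
    using q8_omega_prod_hom by (auto simp: hom_def)
  have "card (q8_omega_prod ` carrier Q8_rtimes_C3) = card (Q8_set \<times> {0..<3::nat})"
    by (simp add: card_image inj_on_q8_omega_prod flip: carrier_Q8_rtimes_C3)
  then show "card (q8_omega_prod ` carrier Q8_rtimes_C3) = card (carrier H1)"
    using order_H1 by (simp add: card_cartesian_product card_Q8_set order_def)
qed

lemma H1_iso_Q8_rtimes_C3: "H1 \<cong> Q8_rtimes_C3"
proof -
  have "q8_omega_prod \<in> iso Q8_rtimes_C3 H1"
    using q8_omega_prod_hom inj_on_q8_omega_prod q8_omega_prod_image by (simp add: iso_def bij_betw_def)
  then show ?thesis
    using iso_set_sym_mult_closed Q8_rtimes_C3_mult_closed by (blast intro: is_isoI)
qed

section \<open>\<open>H1\<close> as the binary tetrahedral group\<close>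

definition transposition_product :: "nat \<times> nat \<times> nat \<times> nat \<Rightarrow> nat \<Rightarrow> nat" where
  "transposition_product = (\<lambda>(a, b, c, d). Transposition.transpose a b \<circ> Transposition.transpose c d)"

text \<open>The entry \<open>(a, b, c, d)\<close> of a unit \<open>q\<close> encodes \<open>(a b)(c d)\<close>, the permutation induced by
  conjugation with \<open>q\<close> on the cyclic subgroups of order 6 generated by \<open>(1+i+j+k)/2\<close>, \<open>(1+i-j-k)/2\<close>,
  \<open>(1-i+j-k)/2\<close>, \<open>(1-i-j+k)/2\<close>, numbered 1 to 4.\<close>

definition a4_table :: "(int list \<times> nat \<times> nat \<times> nat \<times> nat) list" where
  "a4_table =
    [([2,0,0,0], (1,1,1,1)), ([0,2,0,0], (1,2,3,4)), ([0,0,2,0], (1,3,2,4)), ([0,0,0,2], (1,4,2,3)),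
     ([-2,0,0,0], (1,1,1,1)), ([0,-2,0,0], (1,2,3,4)), ([0,0,-2,0], (1,3,2,4)), ([0,0,0,-2], (1,4,2,3)),
     ([1,1,1,1], (2,3,3,4)), ([1,1,1,-1], (1,2,2,3)), ([1,1,-1,1], (1,2,1,4)), ([1,1,-1,-1], (1,3,1,4)),
     ([1,-1,1,1], (1,3,3,4)), ([1,-1,1,-1], (1,2,2,4)), ([1,-1,-1,1], (1,2,1,3)), ([1,-1,-1,-1], (2,3,2,4)),
     ([-1,1,1,1], (2,3,2,4)), ([-1,1,1,-1], (1,2,1,3)), ([-1,1,-1,1], (1,2,2,4)), ([-1,1,-1,-1], (1,3,3,4)),
     ([-1,-1,1,1], (1,3,1,4)), ([-1,-1,1,-1], (1,2,1,4)), ([-1,-1,-1,1], (1,2,2,3)), ([-1,-1,-1,-1], (2,3,3,4))]"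

definition a4_perm :: "int list \<Rightarrow> nat \<Rightarrow> nat" where
  "a4_perm p = transposition_product (the (map_of a4_table p))"

definition to_A4 :: "quat \<Rightarrow> nat \<Rightarrow> nat" where
  "to_A4 q = a4_perm (twice_coords q)"

lemma map_fst_a4_table: "map fst a4_table = hurwitz_units"
  by (simp add: a4_table_def hurwitz_units_def)

lemma a4_table_valid:
  "\<forall>(p, a, b, c, d)\<in>set a4_table.
     1 \<le> a \<and> a \<le> 4 \<and> 1 \<le> b \<and> b \<le> 4 \<and> 1 \<le> c \<and> c \<le> 4 \<and> 1 \<le> d \<and> d \<le> 4 \<and> (a = b) = (c = d)"
  by code_simp

lemma a4_table_mult:
  "\<forall>(p, s)\<in>set a4_table. \<forall>(q, t)\<in>set a4_table.
     (case map_of a4_table (half_mult_coords p q) of None \<Rightarrow> False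
      | Some u \<Rightarrow> \<forall>n\<in>set [1, 2, 3, 4]. transposition_product u n = transposition_product s (transposition_product t n))"
  by code_simp

lemma a4_table_trivial:
  "\<forall>(p, s)\<in>set a4_table. (\<forall>n\<in>set [1, 2, 3, 4]. transposition_product s n = n) \<longleftrightarrow> p = [2, 0, 0, 0] \<or> p = [-2, 0, 0, 0]"
  by code_simp

lemma card_a4_perm_values: "card ((\<lambda>p. map (a4_perm p) [1, 2, 3, 4]) ` set hurwitz_units) = 12"
  by code_simp

lemma a4_table_lookup: "p \<in> set hurwitz_units \<Longrightarrow> (p, the (map_of a4_table p)) \<in> set a4_table"
  by (metis map_fst_a4_table list.set_map map_of_SomeD option.collapse map_of_eq_None_iff)

lemma transposition_product_in_alt_group: "(p, s) \<in> set a4_table \<Longrightarrow> transposition_product s \<in> carrier (alt_group 4)"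
  using a4_table_valid transpose_comp_transpose_in_alt_group[of _ 4]
  by (cases s) (fastforce simp: transposition_product_def)

lemma to_A4_quat_half: "p \<in> set hurwitz_units \<Longrightarrow> to_A4 (quat_half p) = a4_perm p"
  by (simp add: to_A4_def twice_coords_quat_half length_hurwitz_units)

lemma atLeastAtMost_1_4: "{1..4} = set [1, 2, 3, 4 :: nat]"
  by auto

lemma to_A4_hom: "to_A4 \<in> hom H1 (alt_group 4)"
proof (rule homI)
  fix x assume "x \<in> carrier H1"
  then show "to_A4 x \<in> carrier (alt_group 4)"
    by (auto simp: carrier_H1 to_A4_quat_half a4_perm_def intro!: transposition_product_in_alt_group[OF a4_table_lookup])
next
  fix x y assume "x \<in> carrier H1" "y \<in> carrier H1"
  then obtain p q where p: "p \<in> set hurwitz_units" "x = quat_half p"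
    and q: "q \<in> set hurwitz_units" "y = quat_half q"
    by (auto simp: carrier_H1)
  define s t where "s = the (map_of a4_table p)" and "t = the (map_of a4_table q)"
  have st: "(p, s) \<in> set a4_table" "(q, t) \<in> set a4_table"
    using p q a4_table_lookup s_def t_def by blast+
  have pq: "half_mult_coords p q \<in> set hurwitz_units" "x \<otimes>\<^bsub>H1\<^esub> y = quat_half (half_mult_coords p q)"
    using hurwitz_units_mult_closed p q qmult_hurwitz_units by auto
  obtain u where u: "map_of a4_table (half_mult_coords p q) = Some u"
    and agree: "\<forall>n\<in>{1..4}. transposition_product u n = transposition_product s (transposition_product t n)"
    using a4_table_mult st unfolding atLeastAtMost_1_4 by (fastforce split: option.splits)
  moreover have "transposition_product u = transposition_product s \<circ> transposition_product t"
    using transposition_product_in_alt_group[OF st(1)] transposition_product_in_alt_group[OF st(2)]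
      transposition_product_in_alt_group[OF a4_table_lookup[OF pq(1)]] u agree
    by (intro permutes_eqI[of _ "{1..4}"]) (auto simp: alt_group_carrier intro: permutes_compose)
  ultimately show "to_A4 (x \<otimes>\<^bsub>H1\<^esub> y) = to_A4 x \<otimes>\<^bsub>alt_group 4\<^esub> to_A4 y"
    using p q pq by (simp add: to_A4_quat_half a4_perm_def alt_group_mult s_def t_def)
qed

definition pm_one :: "quat set" where
  "pm_one = {Quat 1 0 0 0, Quat (-1) 0 0 0}"

lemma pm_one_subset_H1: "pm_one \<subseteq> carrier H1"
  by (simp add: pm_one_def H1_def H1_set_def Q8_set_explicit)

lemma kernel_to_A4: "kernel H1 (alt_group 4) to_A4 = pm_one"
proof -
  have "to_A4 (quat_half p) = id \<longleftrightarrow> quat_half p \<in> pm_one" if p: "p \<in> set hurwitz_units" for p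
  proof -
    let ?s = "the (map_of a4_table p)"
    have "to_A4 (quat_half p) = id \<longleftrightarrow> (\<forall>n\<in>{1..4}. transposition_product ?s n = n)"
      using transposition_product_in_alt_group[OF a4_table_lookup[OF p]] permutes_eqI[of _ "{1..4::nat}" id]
      by (auto simp: to_A4_quat_half[OF p] a4_perm_def alt_group_carrier permutes_id)
    also have "\<dots> \<longleftrightarrow> p = [2, 0, 0, 0] \<or> p = [-2, 0, 0, 0]"
      using a4_table_trivial a4_table_lookup[OF p] unfolding atLeastAtMost_1_4 by fastforce
    also have "\<dots> \<longleftrightarrow> quat_half p \<in> pm_one"
    proof -
      have "[2, 0, 0, 0] \<in> set hurwitz_units" "[-2, 0, 0, 0] \<in> set hurwitz_units"
        by (simp_all add: hurwitz_units_def)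
      moreover have "quat_half p \<in> pm_one \<longleftrightarrow>
          quat_half p = quat_half [2, 0, 0, 0] \<or> quat_half p = quat_half [-2, 0, 0, 0]"
        by (simp add: pm_one_def quat_half_def)
      ultimately show ?thesis
        using inj_onD[OF inj_on_quat_half] p by blast
    qed
    finally show ?thesis .
  qed
  then show ?thesis
    using pm_one_subset_H1
    by (auto simp: kernel_def carrier_H1 alt_group_one)
qed

lemma to_A4_onto: "to_A4 ` carrier H1 = carrier (alt_group 4)"
proof (rule card_subset_eq)
  have card_A4: "card (carrier (alt_group 4)) = 12"
    using alt_group_card_carrier[of 4] by (simp add: fact_numeral)
  then show "finite (carrier (alt_group 4))"
    by (simp add: card_ge_0_finite)
  show "to_A4 ` carrier H1 \<subseteq> carrier (alt_group 4)"
    using to_A4_hom by (auto simp: hom_def)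
  have "to_A4 ` carrier H1 = a4_perm ` set hurwitz_units"
    by (simp add: carrier_H1 image_image to_A4_quat_half cong: image_cong)
  then have "12 \<le> card (to_A4 ` carrier H1)"
    using card_image_le[of "a4_perm ` set hurwitz_units" "\<lambda>f. map f [1, 2, 3, 4]"] card_a4_perm_values
    by (simp add: image_image)
  then show "card (to_A4 ` carrier H1) = card (carrier (alt_group 4))"
    using card_A4 card_mono[OF \<open>finite (carrier (alt_group 4))\<close> \<open>to_A4 ` carrier H1 \<subseteq> _\<close>] by simp
qed

lemma H1_Mod_pm_one_iso_A4: "H1 Mod pm_one \<cong> alt_group 4"
proof -
  interpret group_hom H1 "alt_group 4" to_A4
    by (intro group_hom.intro group_hom_axioms.intro group_H1 alt_group_is_group to_A4_hom)
  show ?thesis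
    using FactGroup_iso[OF to_A4_onto] kernel_to_A4 by simp
qed

lemma subgroup_pm_one: "subgroup pm_one H1"
proof (rule H1.subgroupI[OF pm_one_subset_H1])
  show "pm_one \<noteq> {}"
    by (simp add: pm_one_def)
next
  fix a assume a: "a \<in> pm_one"
  then have "a \<otimes>\<^bsub>H1\<^esub> a = \<one>\<^bsub>H1\<^esub>"
    by (auto simp: pm_one_def qmult_def)
  then show "inv\<^bsub>H1\<^esub> a \<in> pm_one"
    using H1.inv_equality a pm_one_subset_H1 by auto
next
  fix a b assume "a \<in> pm_one" "b \<in> pm_one"
  then show "a \<otimes>\<^bsub>H1\<^esub> b \<in> pm_one"
    by (auto simp: pm_one_def qmult_def)
qed

lemma card_pm_one: "card pm_one = 2"
  by (simp add: pm_one_def)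

lemma pm_one_central: "\<forall>z\<in>pm_one. \<forall>g\<in>carrier H1. z \<otimes>\<^bsub>H1\<^esub> g = g \<otimes>\<^bsub>H1\<^esub> z"
  by (auto simp: pm_one_def qmult_def)

lemma pm_one_no_complement:
  "\<nexists>K. subgroup K H1 \<and> K \<inter> pm_one = {\<one>\<^bsub>H1\<^esub>} \<and> K <#>\<^bsub>H1\<^esub> pm_one = carrier H1"
proof
  \<comment> \<open>a complement would contain \<open>i\<close> or \<open>-i\<close>, whose square is \<open>-1\<close>\<close>
  assume "\<exists>K. subgroup K H1 \<and> K \<inter> pm_one = {\<one>\<^bsub>H1\<^esub>} \<and> K <#>\<^bsub>H1\<^esub> pm_one = carrier H1"
  then obtain K where K: "subgroup K H1" "K \<inter> pm_one = {\<one>\<^bsub>H1\<^esub>}" "K <#>\<^bsub>H1\<^esub> pm_one = carrier H1"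
    by blast
  have "Quat 0 1 0 0 \<in> K <#>\<^bsub>H1\<^esub> pm_one"
    unfolding K(3) by (simp add: H1_def H1_set_def Q8_set_explicit)
  then obtain k z where k: "k \<in> K" "z \<in> pm_one" "Quat 0 1 0 0 = qmult k z"
    unfolding set_mult_def by auto
  then have "k = Quat 0 1 0 0 \<or> k = Quat 0 (-1) 0 0"
    by (cases k) (auto simp: pm_one_def qmult_def)
  then have "qmult k k = Quat (-1) 0 0 0"
    by (auto simp: qmult_def)
  moreover have "qmult k k \<in> K"
    using K(1) k(1) subgroup.m_closed by fastforce
  ultimately have "Quat (-1) 0 0 0 \<in> K \<inter> pm_one"
    by (simp add: pm_one_def)
  then show False
    using K(2) by simp
qed

lemma binary_tetrahedral_H1: "binary_tetrahedral H1"
  unfolding binary_tetrahedral_def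
  using group_H1 subgroup_pm_one card_pm_one pm_one_central H1_Mod_pm_one_iso_A4 pm_one_no_complement
  by blast

section \<open>The fixed points of \<open>rho\<close> in \<open>W(D4)\<close>\<close>

lemma ix4_lt: "ix4 i < 4"
  by (simp add: ix4_def)

lemma ix4_of_nat: "a < 4 \<Longrightarrow> ix4 (of_nat a) = a"
  by (auto simp: ix4_def less_Suc_eq numeral_eq_Suc)

lemma of_nat_ix4: "of_nat (ix4 i) = i"
  using exhaust_4[of i] by (auto simp: ix4_def)

lemma ix4_eq_iff: "ix4 i = ix4 j \<longleftrightarrow> i = j"
  by (metis of_nat_ix4)

lemma ix4_numeral: "ix4 0 = 0" "ix4 1 = 1" "ix4 2 = 2" "ix4 3 = 3" "ix4 4 = 0"
  by (simp_all add: ix4_def)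

lemma bij_betw_ix4: "bij_betw ix4 UNIV {..<4}"
  by (rule bij_betwI[where g = of_nat]) (auto simp: ix4_lt ix4_of_nat of_nat_ix4)

lemma prod_ix4: "(\<Prod>j\<in>UNIV. h (ix4 j)) = (\<Prod>a<4. h a)"
  using bij_betw_ix4 by (rule prod.reindex_bij_betw)

lemma sum_ix4: "(\<Sum>j\<in>UNIV. h (ix4 j)) = (\<Sum>a<4. h a)"
  using bij_betw_ix4 by (rule sum.reindex_bij_betw)

lemma nth_ix4_lt_4:
  fixes p :: "nat list"
  assumes "length p = 4" "set p \<subseteq> {0, 1, 2, 3}"
  shows "p ! ix4 j < 4"
  using assms nth_mem[of "ix4 j" p] ix4_lt[of j] by fastforce

lemma all_ix4: "(\<forall>i j. P (ix4 i) (ix4 j)) \<longleftrightarrow> (\<forall>a<4. \<forall>b<4. P a b)"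
proof (intro iffI allI impI)
  fix a b :: nat
  assume "\<forall>i j. P (ix4 i) (ix4 j)" "a < 4" "b < 4"
  then show "P a b"
    using ix4_of_nat by metis
next
  fix i j
  assume "\<forall>a<4. \<forall>b<4. P a b"
  then show "P (ix4 i) (ix4 j)"
    using ix4_lt by blast
qed

lemma diag_mat_perm_mat_entry: "(diag_mat e ** perm_mat p) $ i $ j = (if i = p j then e $ i else 0)"
proof -
  have "(diag_mat e ** perm_mat p) $ i $ j = (\<Sum>k\<in>UNIV. if k = i then e $ i * (if i = p j then 1 else 0) else 0)"
    unfolding matrix_matrix_mult_def diag_mat_def perm_mat_def
    by (simp only: vec_lambda_beta, rule sum.cong, auto)
  then show ?thesis
    by simp
qed

definition signed_perm_mat :: "int list \<Rightarrow> nat list \<Rightarrow> real^4^4" where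
  "signed_perm_mat g p = (\<chi> i j. if ix4 i = p ! ix4 j then of_int (g ! ix4 j) else 0)"

definition signed_perm_compose :: "int list \<times> nat list \<Rightarrow> int list \<times> nat list \<Rightarrow> int list \<times> nat list" where
  "signed_perm_compose = (\<lambda>(g, p) (g', p').
     (map (\<lambda>j. g ! (p' ! j) * g' ! j) [0..<4], map (\<lambda>j. p ! (p' ! j)) [0..<4]))"

definition signed_perms_D4 :: "(int list \<times> nat list) list" where
  "signed_perms_D4 = List.product (filter (\<lambda>g. prod_list g = 1) (List.n_lists 4 [1, -1]))
     (filter distinct (List.n_lists 4 [0, 1, 2, 3]))"

lemma signed_perms_D4_iff: "(g, p) \<in> set signed_perms_D4 \<longleftrightarrow>
    length g = 4 \<and> set g \<subseteq> {1, -1} \<and> prod_list g = 1 \<and> length p = 4 \<and> set p \<subseteq> {0, 1, 2, 3} \<and> distinct p"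
  by (auto simp: signed_perms_D4_def set_n_lists)

lemma distinct_list_permutes:
  assumes "length p = 4" "set p \<subseteq> {0, 1, 2, 3}" "distinct p"
  shows "(\<lambda>j. of_nat (p ! ix4 j) :: 4) permutes UNIV"
proof -
  have "inj (\<lambda>j. of_nat (p ! ix4 j) :: 4)"
  proof (rule injI)
    fix j j' assume "(of_nat (p ! ix4 j) :: 4) = of_nat (p ! ix4 j')"
    then have "p ! ix4 j = p ! ix4 j'"
      using nth_ix4_lt_4[OF assms(1,2)] ix4_of_nat by metis
    then show "j = j'"
      using assms ix4_lt by (simp add: nth_eq_iff_index_eq ix4_eq_iff)
  qed
  then have "bij (\<lambda>j. of_nat (p ! ix4 j) :: 4)"
    by (simp add: bij_def finite_UNIV_inj_surj)
  then show ?thesis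
    using bij_imp_permutes by blast
qed

lemma signed_perm_mat_in_WD4:
  assumes "(g, p) \<in> set signed_perms_D4"
  shows "signed_perm_mat g p \<in> WD4"
proof -
  have g: "length g = 4" "set g \<subseteq> {1, -1}" "prod_list g = 1"
    and p: "length p = 4" "set p \<subseteq> {0, 1, 2, 3}" "distinct p"
    using assms by (simp_all add: signed_perms_D4_iff)
  define \<pi> :: "4 \<Rightarrow> 4" where "\<pi> j = of_nat (p ! ix4 j)" for j
  have ix4_\<pi>: "ix4 (\<pi> j) = p ! ix4 j" for j
    using nth_ix4_lt_4[OF p(1,2)] by (simp add: \<pi>_def ix4_of_nat)
  have perm: "\<pi> permutes UNIV"
    unfolding \<pi>_def using p by (rule distinct_list_permutes)
  define e :: "real^4" where "e = (\<chi> i. of_int (g ! ix4 (inv_into UNIV \<pi> i)))"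
  have e_\<pi>: "e $ \<pi> j = of_int (g ! ix4 j)" for j
    using perm by (simp add: e_def permutes_inverses(2))
  have "signed_perm_mat g p = diag_mat e ** perm_mat \<pi>"
    by (simp add: vec_eq_iff diag_mat_perm_mat_entry signed_perm_mat_def e_\<pi> ix4_eq_iff flip: ix4_\<pi>)
  moreover have "e $ i = 1 \<or> e $ i = -1" for i
    using g nth_mem[of "ix4 (inv_into UNIV \<pi> i)" g] ix4_lt by (fastforce simp: e_def)
  moreover have "(\<Prod>i\<in>UNIV. e $ i) = 1"
  proof -
    have "(\<Prod>i\<in>UNIV. e $ i) = (\<Prod>j\<in>UNIV. e $ \<pi> j)"
      using prod.permute[OF perm, of "\<lambda>i. e $ i"] by (simp add: comp_def)
    also have "\<dots> = (\<Prod>a<4. of_int (g ! a))"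
      using prod_ix4[of "\<lambda>a. of_int (g ! a)"] by (simp add: e_\<pi>)
    also have "\<dots> = of_int (prod_list g)"
      using g(1) by (auto simp: length_Suc_conv numeral_eq_Suc lessThan_Suc mult_ac)
    finally show ?thesis
      using g(3) by simp
  qed
  ultimately show ?thesis
    using perm unfolding WD4_def by blast
qed

lemma distinct_permutes_list:
  assumes "\<pi> permutes (UNIV :: 4 set)"
  shows "distinct (map (\<lambda>a. ix4 (\<pi> (of_nat a))) [0..<4])"
proof -
  have "inj_on (\<lambda>a. ix4 (\<pi> (of_nat a))) {0..<4}"
  proof (rule inj_onI)
    fix a b assume "a \<in> {0..<4}" "b \<in> {0..<4}" "ix4 (\<pi> (of_nat a)) = ix4 (\<pi> (of_nat b))"
    then show "a = b"
      using permutes_inj[OF assms] by (metis atLeastLessThan_iff injD ix4_eq_iff ix4_of_nat)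
  qed
  then show ?thesis
    by (simp add: distinct_map)
qed

lemma WD4_subset_signed_perm_mats: "WD4 \<subseteq> case_prod signed_perm_mat ` set signed_perms_D4"
proof
  fix x assume "x \<in> WD4"
  then obtain e \<pi> where x: "x = diag_mat e ** perm_mat \<pi>" and e: "\<forall>i. e $ i = 1 \<or> e $ i = -1"
    and prod_e: "(\<Prod>i\<in>UNIV. e $ i) = 1" and perm: "\<pi> permutes UNIV"
    unfolding WD4_def by blast
  define \<epsilon> :: "4 \<Rightarrow> int" where "\<epsilon> i = (if e $ i = 1 then 1 else -1)" for i
  have of_int_\<epsilon>: "of_int (\<epsilon> i) = e $ i" for i
    using e by (auto simp: \<epsilon>_def)
  define g where "g = map (\<lambda>a. \<epsilon> (\<pi> (of_nat a))) [0..<4]"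
  define p where "p = map (\<lambda>a. ix4 (\<pi> (of_nat a))) [0..<4]"
  have g_nth: "g ! ix4 j = \<epsilon> (\<pi> j)" and p_nth: "p ! ix4 j = ix4 (\<pi> j)" for j
    using ix4_lt[of j] by (simp_all add: g_def p_def of_nat_ix4)
  have "x = signed_perm_mat g p"
    by (simp add: vec_eq_iff x diag_mat_perm_mat_entry signed_perm_mat_def g_nth p_nth ix4_eq_iff of_int_\<epsilon>)
  moreover have "set g \<subseteq> {1, -1}"
    by (auto simp: g_def \<epsilon>_def)
  moreover have "prod_list g = 1"
  proof -
    have "of_int (prod_list g) = (\<Prod>a<4. of_int (\<epsilon> (\<pi> (of_nat a))) :: real)"
      by (simp add: g_def numeral_eq_Suc lessThan_Suc mult_ac)
    also have "\<dots> = (\<Prod>j\<in>UNIV. e $ \<pi> j)"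
      using prod_ix4[of "\<lambda>a. e $ \<pi> (of_nat a)"] by (simp add: of_nat_ix4 of_int_\<epsilon>)
    also have "\<dots> = 1"
      using prod.permute[OF perm, of "\<lambda>i. e $ i"] prod_e by (simp add: comp_def)
    finally show ?thesis
      by simp
  qed
  moreover have "set p \<subseteq> {0, 1, 2, 3}"
    by (auto simp: p_def ix4_def)
  moreover have "distinct p"
    unfolding p_def using perm by (rule distinct_permutes_list)
  ultimately show "x \<in> case_prod signed_perm_mat ` set signed_perms_D4"
    by (force simp: signed_perms_D4_iff g_def p_def)
qed

lemma WD4_eq: "WD4 = case_prod signed_perm_mat ` set signed_perms_D4"
  using WD4_subset_signed_perm_mats signed_perm_mat_in_WD4 by auto

lemma signed_perm_mat_mult:
  assumes "length p' = 4" "set p' \<subseteq> {0, 1, 2, 3}"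
  shows "signed_perm_mat g p ** signed_perm_mat g' p' = case_prod signed_perm_mat (signed_perm_compose (g, p) (g', p'))"
proof -
  have "(signed_perm_mat g p ** signed_perm_mat g' p') $ i $ j
      = case_prod signed_perm_mat (signed_perm_compose (g, p) (g', p')) $ i $ j" for i j
  proof -
    have "p' ! ix4 j < 4"
      using assms by (rule nth_ix4_lt_4)
    then have "p' ! ix4 j \<in> {0, 1, 2, 3}"
      by auto
    then show ?thesis
      using ix4_lt[of j]
      by (auto simp: matrix_matrix_mult_def signed_perm_mat_def sum_4 ix4_numeral signed_perm_compose_def)
  qed
  then show ?thesis
    by (simp add: vec_eq_iff)
qed

lemma signed_perm_mat_inj:
  assumes "(g, p) \<in> set signed_perms_D4" "(g', p') \<in> set signed_perms_D4"
    and eq: "signed_perm_mat g p = signed_perm_mat g' p'"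
  shows "g = g' \<and> p = p'"
proof -
  have "g ! a = g' ! a \<and> p ! a = p' ! a" if a: "a < 4" for a
  proof -
    have "p ! a \<in> set p" "g ! a \<in> set g"
      using assms(1) a by (simp_all add: signed_perms_D4_iff)
    then have pa: "p ! a < 4" and ga: "g ! a \<noteq> 0"
      using assms(1) by (auto simp: signed_perms_D4_iff)
    have "signed_perm_mat g p $ of_nat (p ! a) $ of_nat a = of_int (g ! a)"
      using a pa by (simp add: signed_perm_mat_def ix4_of_nat)
    moreover have "signed_perm_mat g' p' $ of_nat (p ! a) $ of_nat a = (if p ! a = p' ! a then of_int (g' ! a) else 0)"
      using a pa by (simp add: signed_perm_mat_def ix4_of_nat)
    ultimately show ?thesis
      using eq ga by (auto split: if_splits)
  qed
  then show ?thesis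
    using assms(1,2) by (auto intro!: nth_equalityI simp: signed_perms_D4_iff)
qed

definition rho_int :: "int list list" where
  "rho_int = [[-1, 1, 1, 1], [-1, -1, 1, -1], [-1, -1, -1, 1], [-1, 1, -1, -1]]"

lemma rho_entry: "rho $ i $ j = of_int (rho_int ! ix4 i ! ix4 j) / 2"
  by (simp add: rho_def rho_int_def)

lemma rho_transpose: "rho ** transpose rho = mat 1" "transpose rho ** rho = mat 1"
  by (simp_all add: vec_eq_iff forall_4 sum_4 matrix_matrix_mult_def mat_def transpose_def
      rho_entry rho_int_def ix4_numeral)

lemma Fix_rho_carrier_iff: "x \<in> carrier Fix_rho \<longleftrightarrow> x \<in> WD4 \<and> rho ** x = x ** rho"
  using conj_fixed_iff_commute[OF rho_transpose] by (simp add: Fix_rho_def matrix_inv_eqI[OF rho_transpose])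

lemma rho_mult_signed_perm_mat_entry:
  assumes "length p = 4" "set p \<subseteq> {0, 1, 2, 3}"
  shows "(rho ** signed_perm_mat g p) $ i $ j = of_int (rho_int ! ix4 i ! (p ! ix4 j) * g ! ix4 j) / 2"
proof -
  have "(rho ** signed_perm_mat g p) $ i $ j
      = (\<Sum>k\<in>UNIV. of_int (rho_int ! ix4 i ! ix4 k) / 2 * (if ix4 k = p ! ix4 j then of_int (g ! ix4 j) else 0))"
    by (simp add: matrix_matrix_mult_def signed_perm_mat_def rho_entry)
  also have "\<dots> = (\<Sum>a<4. of_int (rho_int ! ix4 i ! a) / 2 * (if a = p ! ix4 j then of_int (g ! ix4 j) else (0::real)))"
    by (rule sum_ix4)
  also have "\<dots> = (\<Sum>a<4. if a = p ! ix4 j then of_int (rho_int ! ix4 i ! a) / 2 * of_int (g ! ix4 j) else 0)"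
    by (rule sum.cong) auto
  finally show ?thesis
    using nth_ix4_lt_4[OF assms] by (simp add: sum.delta)
qed

lemma signed_perm_mat_mult_rho_entry:
  "(signed_perm_mat g p ** rho) $ i $ j
    = of_int (\<Sum>a<4. if p ! a = ix4 i then g ! a * rho_int ! a ! ix4 j else 0) / 2"
proof -
  have "(signed_perm_mat g p ** rho) $ i $ j
      = (\<Sum>k\<in>UNIV. (if ix4 i = p ! ix4 k then of_int (g ! ix4 k) else 0) * (of_int (rho_int ! ix4 k ! ix4 j) / 2))"
    by (simp add: matrix_matrix_mult_def signed_perm_mat_def rho_entry)
  also have "\<dots> = (\<Sum>a<4. (if ix4 i = p ! a then of_int (g ! a) else 0) * (of_int (rho_int ! a ! ix4 j) / (2::real)))"
    by (rule sum_ix4)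
  also have "\<dots> = of_int (\<Sum>a<4. if p ! a = ix4 i then g ! a * rho_int ! a ! ix4 j else 0) / 2"
    by (simp add: sum_divide_distrib eq_commute[of "ix4 i"]) (rule sum.cong; simp)
  finally show ?thesis .
qed

definition rho_commutes_coords :: "int list \<Rightarrow> nat list \<Rightarrow> bool" where
  "rho_commutes_coords g p \<longleftrightarrow> (\<forall>a<4. \<forall>b<4.
     rho_int ! a ! (p ! b) * g ! b = (\<Sum>k<4. if p ! k = a then g ! k * rho_int ! k ! b else 0))"

lemma rho_commutes_signed_perm_mat_iff:
  assumes "length p = 4" "set p \<subseteq> {0, 1, 2, 3}"
  shows "rho ** signed_perm_mat g p = signed_perm_mat g p ** rho \<longleftrightarrow> rho_commutes_coords g p"
proof -
  have "rho ** signed_perm_mat g p = signed_perm_mat g p ** rho \<longleftrightarrow>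
      (\<forall>i j. rho_int ! ix4 i ! (p ! ix4 j) * g ! ix4 j =
         (\<Sum>k<4. if p ! k = ix4 i then g ! k * rho_int ! k ! ix4 j else 0))"
    by (simp add: vec_eq_iff rho_mult_signed_perm_mat_entry[OF assms] signed_perm_mat_mult_rho_entry
        del: of_int_sum of_int_mult)
  also have "\<dots> \<longleftrightarrow> rho_commutes_coords g p"
    unfolding rho_commutes_coords_def
    by (rule all_ix4[of "\<lambda>a b. rho_int ! a ! (p ! b) * g ! b =
      (\<Sum>k<4. if p ! k = a then g ! k * rho_int ! k ! b else 0)"])
  finally show ?thesis .
qed

text \<open>The entry of \<open>q = a \<omega>\<^sup>m\<close> (\<open>a \<in> Q\<^sub>8\<close>, \<open>m < 3\<close>) is the matrix of \<open>x \<mapsto> \<omega>\<^sup>2\<^sup>m x q'\<close>,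
  where \<open>q'\<close> is \<open>q\<close> with \<open>i\<close> and \<open>j\<close> interchanged.  Since \<open>rho\<close> is the matrix of left
  multiplication by \<open>\<omega>\<close>, these commute with \<open>rho\<close>.\<close>

definition fix_table :: "(int list \<times> int list \<times> nat list) list" where
  "fix_table =
    [([2,0,0,0], [1,1,1,1], [0,1,2,3]), ([0,2,0,0], [1,1,-1,-1], [2,3,0,1]), ([0,0,2,0], [1,-1,-1,1], [1,0,3,2]),
     ([0,0,0,2], [1,-1,1,-1], [3,2,1,0]), ([-2,0,0,0], [-1,-1,-1,-1], [0,1,2,3]), ([0,-2,0,0], [-1,-1,1,1], [2,3,0,1]),
     ([0,0,-2,0], [-1,1,1,-1], [1,0,3,2]), ([0,0,0,-2], [-1,1,-1,1], [3,2,1,0]), ([1,1,1,1], [-1,-1,-1,-1], [0,3,1,2]),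
     ([1,1,1,-1], [-1,1,1,-1], [2,0,1,3]), ([1,1,-1,1], [-1,-1,1,1], [3,1,0,2]), ([1,1,-1,-1], [1,-1,-1,1], [3,0,2,1]),
     ([1,-1,1,1], [-1,1,-1,1], [1,3,2,0]), ([1,-1,1,-1], [1,-1,1,-1], [2,1,3,0]), ([1,-1,-1,1], [1,1,-1,-1], [1,2,0,3]),
     ([1,-1,-1,-1], [-1,-1,-1,-1], [0,2,3,1]), ([-1,1,1,1], [1,1,1,1], [0,2,3,1]), ([-1,1,1,-1], [-1,-1,1,1], [1,2,0,3]),
     ([-1,1,-1,1], [-1,1,-1,1], [2,1,3,0]), ([-1,1,-1,-1], [1,-1,1,-1], [1,3,2,0]), ([-1,-1,1,1], [-1,1,1,-1], [3,0,2,1]),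
     ([-1,-1,1,-1], [1,1,-1,-1], [3,1,0,2]), ([-1,-1,-1,1], [1,-1,-1,1], [2,0,1,3]), ([-1,-1,-1,-1], [1,1,1,1], [0,3,1,2])]"

lemma map_fst_fix_table: "map fst fix_table = hurwitz_units"
  by (simp add: fix_table_def hurwitz_units_def)

lemma fix_table_values: "set (map snd fix_table) = set (filter (case_prod rho_commutes_coords) signed_perms_D4)"
  by code_simp

lemma distinct_fix_table_values: "distinct (map snd fix_table)"
  by code_simp

lemma fix_table_mult:
  "\<forall>(p, v)\<in>set fix_table. \<forall>(q, w)\<in>set fix_table.
     map_of fix_table (half_mult_coords p q) = Some (signed_perm_compose v w)"
  by code_simp

lemma fix_table_lookup: "p \<in> set hurwitz_units \<Longrightarrow> (p, the (map_of fix_table p)) \<in> set fix_table"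
  by (metis map_fst_fix_table list.set_map map_of_SomeD option.collapse map_of_eq_None_iff)

lemma fix_table_values_D4: "v \<in> set (map snd fix_table) \<Longrightarrow> v \<in> set signed_perms_D4"
  using fix_table_values by auto

lemma carrier_Fix_rho: "carrier Fix_rho = case_prod signed_perm_mat ` set (map snd fix_table)"
proof -
  have "carrier Fix_rho = {x \<in> case_prod signed_perm_mat ` set signed_perms_D4. rho ** x = x ** rho}"
    using Fix_rho_carrier_iff WD4_eq by blast
  also have "\<dots> = case_prod signed_perm_mat ` set (filter (case_prod rho_commutes_coords) signed_perms_D4)"
    using rho_commutes_signed_perm_mat_iff by (fastforce simp: signed_perms_D4_iff)
  finally show ?thesis
    by (simp only: fix_table_values)
qed

definition to_Fix :: "quat \<Rightarrow> real^4^4" where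
  "to_Fix q = case_prod signed_perm_mat (the (map_of fix_table (twice_coords q)))"

lemma to_Fix_quat_half:
  "p \<in> set hurwitz_units \<Longrightarrow> to_Fix (quat_half p) = case_prod signed_perm_mat (the (map_of fix_table p))"
  by (simp add: to_Fix_def twice_coords_quat_half length_hurwitz_units)

lemma to_Fix_hom: "to_Fix \<in> hom H1 Fix_rho"
proof (rule homI)
  fix x assume "x \<in> carrier H1"
  then show "to_Fix x \<in> carrier Fix_rho"
    using fix_table_lookup by (force simp: carrier_H1 carrier_Fix_rho to_Fix_quat_half)
next
  fix x y assume "x \<in> carrier H1" "y \<in> carrier H1"
  then obtain p q where p: "p \<in> set hurwitz_units" "x = quat_half p"
    and q: "q \<in> set hurwitz_units" "y = quat_half q"
    by (auto simp: carrier_H1)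
  obtain g p' where v: "the (map_of fix_table p) = (g, p')"
    by fastforce
  obtain g' q' where w: "the (map_of fix_table q) = (g', q')"
    by fastforce
  have "(q, (g', q')) \<in> set fix_table"
    using fix_table_lookup[OF q(1)] w by simp
  then have "length q' = 4" "set q' \<subseteq> {0, 1, 2, 3}"
    using fix_table_values_D4[of "(g', q')"] by (force simp: signed_perms_D4_iff)+
  moreover have "the (map_of fix_table (half_mult_coords p q)) = signed_perm_compose (g, p') (g', q')"
    using fix_table_mult fix_table_lookup[OF p(1)] fix_table_lookup[OF q(1)] v w by fastforce
  moreover have "x \<otimes>\<^bsub>H1\<^esub> y = quat_half (half_mult_coords p q)" "half_mult_coords p q \<in> set hurwitz_units"
    using hurwitz_units_mult_closed p q qmult_hurwitz_units by auto
  ultimately show "to_Fix (x \<otimes>\<^bsub>H1\<^esub> y) = to_Fix x \<otimes>\<^bsub>Fix_rho\<^esub> to_Fix y"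
    using p q v w by (simp add: to_Fix_quat_half signed_perm_mat_mult Fix_rho_def)
qed

lemma to_Fix_image: "to_Fix ` carrier H1 = carrier Fix_rho"
proof
  show "to_Fix ` carrier H1 \<subseteq> carrier Fix_rho"
    using to_Fix_hom by (auto simp: hom_def)
next
  show "carrier Fix_rho \<subseteq> to_Fix ` carrier H1"
  proof
    fix x assume "x \<in> carrier Fix_rho"
    then obtain p v where pv: "(p, v) \<in> set fix_table" "x = case_prod signed_perm_mat v"
      by (auto simp: carrier_Fix_rho)
    then have p: "p \<in> set hurwitz_units"
      using map_fst_fix_table by (metis fst_conv image_eqI list.set_map)
    have "map_of fix_table p = Some v"
      using pv(1) map_fst_fix_table distinct_hurwitz_units by (simp add: map_of_is_SomeI)
    then show "x \<in> to_Fix ` carrier H1"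
      using p pv by (force simp: carrier_H1 to_Fix_quat_half)
  qed
qed

lemma inj_on_to_Fix: "inj_on to_Fix (carrier H1)"
proof (rule inj_onI)
  fix x y assume "x \<in> carrier H1" "y \<in> carrier H1" and eq: "to_Fix x = to_Fix y"
  then obtain p q where p: "p \<in> set hurwitz_units" "x = quat_half p"
    and q: "q \<in> set hurwitz_units" "y = quat_half q"
    by (auto simp: carrier_H1)
  define v w where "v = the (map_of fix_table p)" and "w = the (map_of fix_table q)"
  have tab: "(p, v) \<in> set fix_table" "(q, w) \<in> set fix_table"
    using fix_table_lookup p q v_def w_def by blast+
  then have D4: "v \<in> set signed_perms_D4" "w \<in> set signed_perms_D4"
    by (auto intro!: fix_table_values_D4 rev_image_eqI)
  have "case_prod signed_perm_mat v = case_prod signed_perm_mat w"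
    using eq p q by (simp add: to_Fix_quat_half v_def w_def)
  then have "v = w"
    using D4 signed_perm_mat_inj[of "fst v" "snd v" "fst w" "snd w"] by (simp add: prod_eq_iff case_prod_beta)
  moreover have "inj_on snd (set fix_table)"
    using distinct_fix_table_values by (simp add: distinct_map)
  ultimately have "(p, v) = (q, w)"
    using tab inj_onD[of snd "set fix_table" "(p, v)" "(q, w)"] by simp
  then show "x = y"
    using p q by simp
qed

lemma Fix_rho_iso_H1: "Fix_rho \<cong> H1"
proof -
  have "to_Fix \<in> iso H1 Fix_rho"
    using to_Fix_hom to_Fix_image inj_on_to_Fix by (simp add: iso_def bij_betw_def)
  then show ?thesis
    by (blast intro: H1.iso_sym is_isoI)
qed

theorem proposition5p6:
  shows "Fix_rho \<cong> H1 \<and> group H1 \<and> order H1 = 24 \<and> H1 \<cong> Q8_rtimes_C3 \<and> binary_tetrahedral H1"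
  using Fix_rho_iso_H1 group_H1 order_H1 H1_iso_Q8_rtimes_C3 binary_tetrahedral_H1 by blast

end
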